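(* Let $p$ be an odd prime and $\alpha>1$ any integer with $\gcd(p,\alpha)=1$. Then for all positive integers $a$, $$S_p^1(a)\leq 4\, a^{\log_p\left(\frac{p+1}{2}\right)} .$$
   Context: A base-$p$ digit $d\in\{0,\dots,p-1\}$ is called small if $d<p/2$ and large otherwise. For integers $a,n\ge1$, $S_p^n(a)=\#\{0\le s<a : \text{the base-}p\text{ representation of }\alpha^s\text{ contains fewer than } n \text{ large digits}\}$ (this depends on the fixed $\alpha$). *)

theory Defs
  imports Complex_Main "HOL-Computational_Algebra.Primes"
begin

fun digits_base :: "nat \<Rightarrow> nat \<Rightarrow> nat list" where
  "digits_base p n = (if p < 2 \<or> n = 0 then [] else n mod p # digits_base p (n div p))"

definition large_digit :: "nat \<Rightarrow> nat \<Rightarrow> bool" where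
  "large_digit p d \<longleftrightarrow> real d \<ge> real p / 2"

definition num_large_digits :: "nat \<Rightarrow> nat \<Rightarrow> nat" where
  "num_large_digits p n = length (filter (large_digit p) (digits_base p n))"

definition S :: "nat \<Rightarrow> nat \<Rightarrow> nat \<Rightarrow> nat \<Rightarrow> nat" where
  "S alpha p n a = card {s. s < a \<and> num_large_digits p (alpha ^ s) < n}"

end

(* Let D_k be the multiplicative order of alpha modulo p^k and e = D_1. The k lowest base-p
   digits of alpha^s depend only on s mod D_k, and D_(k+1) is either D_k or p D_k. In the
   second case the p exponents s + i D_k (i < p) give powers that agree modulo p^k but have
   pairwise different k-th digits, so at most (p+1)/2 of them keep that digit small. Hence,
   writing D_k = e p^j, at most e ((p+1)/2)^j exponents below D_k give powers whose k lowest
   digits are all small. For D_k <= a < p D_k periodicity bounds S(a) by (a/D_k + 1) e ((p+1)/2)^j,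
   and the concavity estimate t + 1 <= 2 t^theta on [1, p], theta = log_p ((p+1)/2),
   applied to t = a/D_k and t = e turns this into 4 a^theta. For a < e the trivial bound
   S(a) <= a suffices. *)

theory Submission
  imports Defs "HOL-Analysis.Analysis" "HOL-Number_Theory.Number_Theory"
begin

lemma add_one_le_two_powr_log:
  fixes p t :: real
  assumes "1 < p" and "1 \<le> t" and "t \<le> p"
  shows "t + 1 \<le> 2 * t powr log p ((p + 1) / 2)"
proof -
  define q where "q = (p + 1) / 2"
  define \<theta> where "\<theta> = log p q"
  define r where "r = log q p"
  have q: "1 < q" "q \<le> p" using assms by (auto simp: q_def)
  have "0 < \<theta>" using q assms by (simp add: \<theta>_def)
  have "\<theta> * r = 1" using q assms by (simp add: \<theta>_def r_def log_def)
  define u where "u = t powr \<theta>"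
  have "1 \<le> u" using assms \<open>0 < \<theta>\<close> by (simp add: u_def ge_one_powr_ge_zero)
  have "u \<le> p powr \<theta>" using assms \<open>0 < \<theta>\<close> by (simp add: u_def powr_mono2)
  then have "u \<le> q" using q assms by (simp add: \<theta>_def)
  have "1 \<le> r" using q by (simp add: r_def)
  \<comment> \<open>\<open>t = u powr r\<close>, and the chord of the convex map \<open>x powr r\<close>
    from \<open>(1, 1)\<close> to \<open>(q, p)\<close> has slope 2\<close>
  have convex: "convex_on {1..q} (\<lambda>x. x powr r)"
    by (rule convex_on_subset[OF powr_convex[OF \<open>1 \<le> r\<close>]]) auto
  have "u powr r \<le> (q powr r - 1 powr r) / (q - 1) * (u - 1) + 1 powr r"
    using convex_onD_Icc'[OF convex, of u] \<open>1 \<le> u\<close> \<open>u \<le> q\<close> by simp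
  also have "u powr r = t" using assms \<open>\<theta> * r = 1\<close> by (simp add: u_def powr_powr)
  also have "q powr r = p" using q assms by (simp add: r_def)
  also have "(p - 1 powr r) / (q - 1) = 2" using q by (simp add: q_def field_simps)
  finally show ?thesis by (simp add: u_def \<theta>_def q_def)
qed

lemma add_one_mult_le_four_powr_log:
  fixes p y e :: real
  assumes "1 < p" and "1 \<le> y" "y \<le> p" and "1 \<le> e" "e \<le> p"
  shows "(y + 1) * (e * ((p + 1) / 2) ^ j) \<le> 4 * (y * e * p ^ j) powr log p ((p + 1) / 2)"
proof -
  define \<theta> where "\<theta> = log p ((p + 1) / 2)"
  have "(p ^ j) powr \<theta> = (p powr \<theta>) ^ j"
    using assms by (simp add: powr_realpow[symmetric] powr_powr powr_power mult.commute)
  also have "p powr \<theta> = (p + 1) / 2" using assms by (simp add: \<theta>_def)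
  finally have pj: "(p ^ j) powr \<theta> = ((p + 1) / 2) ^ j" .
  have "e \<le> 2 * e powr \<theta>"
    using add_one_le_two_powr_log[of p e] assms by (simp add: \<theta>_def)
  moreover have "y + 1 \<le> 2 * y powr \<theta>"
    using add_one_le_two_powr_log[of p y] assms by (simp add: \<theta>_def)
  ultimately have "(y + 1) * (e * ((p + 1) / 2) ^ j)
      \<le> (2 * y powr \<theta>) * (2 * e powr \<theta> * ((p + 1) / 2) ^ j)"
    using assms by (intro mult_mono mult_right_mono) auto
  also have "\<dots> = 4 * (y * e * p ^ j) powr \<theta>"
    using assms by (simp add: powr_mult pj)
  finally show ?thesis by (simp add: \<theta>_def)
qed

lemma cong_1_power_modulus_Suc:
  fixes x m k :: nat
  assumes "1 \<le> k" and "[x = 1] (mod m ^ k)"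
  shows "[x ^ m = 1] (mod m ^ Suc k)"
proof -
  have "int (m ^ k) dvd int x - 1"
    using assms(2) by (metis cong_int_iff cong_iff_dvd_diff of_nat_1)
  moreover have "int m dvd (\<Sum>i<m. int x ^ i)"
  proof -
    have "int m dvd int (m ^ k)" using assms(1) by simp
    then have "[int x = 1] (mod int m)"
      using \<open>int (m ^ k) dvd int x - 1\<close> by (metis cong_iff_dvd_diff dvd_trans)
    then have "[(\<Sum>i<m. int x ^ i) = (\<Sum>i<m. 1)] (mod int m)"
      by (intro cong_sum) (metis cong_pow power_one)
    then show ?thesis by (simp add: cong_def dvd_eq_mod_eq_0)
  qed
  ultimately have "int (m ^ k) * int m dvd (int x - 1) * (\<Sum>i<m. int x ^ i)"
    by (rule mult_dvd_mono)
  then have "int (m ^ Suc k) dvd int x ^ m - 1"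
    by (simp add: power_diff_1_eq mult.commute)
  then show ?thesis
    by (metis cong_int_iff cong_iff_dvd_diff of_nat_1 of_nat_power)
qed

lemma ord_dvd_ord_of_dvd:
  fixes m n a :: nat
  assumes "m dvd n"
  shows "ord m a dvd ord n a"
proof -
  have "[a ^ ord n a = 1] (mod m)" using ord[of a n] assms by (rule cong_dvd_modulus_nat)
  then show ?thesis using ord_divides by blast
qed

lemma ord_prime_power_Suc_cases:
  fixes p \<alpha> k :: nat
  assumes "prime p" and "coprime p \<alpha>" and "1 \<le> k"
  shows "ord (p ^ Suc k) \<alpha> = ord (p ^ k) \<alpha> \<or> ord (p ^ Suc k) \<alpha> = p * ord (p ^ k) \<alpha>"
proof -
  obtain c where c: "ord (p ^ Suc k) \<alpha> = ord (p ^ k) \<alpha> * c"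
    using ord_dvd_ord_of_dvd[of "p ^ k" "p ^ Suc k" \<alpha>] by (rule dvdE) simp
  have "[(\<alpha> ^ ord (p ^ k) \<alpha>) ^ p = 1] (mod p ^ Suc k)"
    using cong_1_power_modulus_Suc[OF assms(3) ord] .
  then have "[\<alpha> ^ (ord (p ^ k) \<alpha> * p) = 1] (mod p ^ Suc k)"
    by (simp only: power_mult)
  then have "ord (p ^ k) \<alpha> * c dvd ord (p ^ k) \<alpha> * p"
    unfolding c[symmetric] using ord_divides by blast
  moreover have "0 < ord (p ^ k) \<alpha>" using assms(2) by simp
  ultimately have "c dvd p" by simp
  then have "c = 1 \<or> c = p" using assms(1) prime_nat_iff by blast
  then show ?thesis using c by auto
qed

lemma ord_prime_bounds:
  fixes p \<alpha> :: nat
  assumes "prime p" and "coprime p \<alpha>"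
  shows "0 < ord p \<alpha>" and "ord p \<alpha> < p"
proof -
  show "0 < ord p \<alpha>" using assms(2) by simp
  have "ord p \<alpha> dvd p - 1"
    using order_divides_totient[OF assms(2)] assms(1) by (simp add: totient_prime)
  then show "ord p \<alpha> < p"
    using prime_gt_1_nat[OF assms(1)] by (auto dest: dvd_imp_le)
qed

lemma modulus_less_power_ord:
  fixes n \<alpha> :: nat
  assumes "1 < \<alpha>" and "coprime n \<alpha>"
  shows "n < \<alpha> ^ ord n \<alpha>"
proof -
  have "\<alpha> \<le> \<alpha> ^ ord n \<alpha>" using assms by (simp add: self_le_power)
  then have "n dvd \<alpha> ^ ord n \<alpha> - 1"
    using ord[of \<alpha> n] cong_altdef_nat[of 1 "\<alpha> ^ ord n \<alpha>" n] assms(1) by linarith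
  then have "n \<le> \<alpha> ^ ord n \<alpha> - 1"
    using \<open>\<alpha> \<le> \<alpha> ^ ord n \<alpha>\<close> assms(1) by (intro dvd_imp_le) auto
  then show ?thesis using \<open>\<alpha> \<le> \<alpha> ^ ord n \<alpha>\<close> assms(1) by linarith
qed

lemma ord_prime_power_unbounded:
  fixes p \<alpha> b :: nat
  assumes "2 \<le> p" and "1 < \<alpha>" and "coprime p \<alpha>"
  shows "\<exists>k. b < ord (p ^ k) \<alpha>"
proof
  let ?k = "\<alpha> ^ b"
  have "\<alpha> ^ b < 2 ^ ?k" by (rule less_exp)
  also have "\<dots> \<le> p ^ ?k" using assms(1) by (rule power_mono) simp
  also have "\<dots> < \<alpha> ^ ord (p ^ ?k) \<alpha>" using assms by (simp add: modulus_less_power_ord)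
  finally show "b < ord (p ^ ?k) \<alpha>" using assms(2) by simp
qed

lemma ex_crossing_nat:
  fixes f :: "nat \<Rightarrow> nat"
  assumes "m \<le> n" and "f m \<le> b" and "b < f n"
  shows "\<exists>k\<ge>m. f k \<le> b \<and> b < f (Suc k)"
  using assms
proof (induction n rule: dec_induct)
  case (step n)
  then show ?case by (cases "f n \<le> b") auto
qed simp

lemma ord_prime_power_bracket:
  fixes p \<alpha> b :: nat
  assumes "prime p" and "1 < \<alpha>" and "coprime p \<alpha>" and "ord p \<alpha> \<le> b"
  shows "\<exists>k\<ge>1. ord (p ^ k) \<alpha> \<le> b \<and> b < p * ord (p ^ k) \<alpha>"
proof -
  obtain n where "b < ord (p ^ n) \<alpha>"
    using ord_prime_power_unbounded[OF prime_ge_2_nat[OF assms(1)] assms(2,3)] by blast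
  moreover have "n \<noteq> 0"
    using calculation assms(4) ord_prime_bounds(1)[OF assms(1,3)] by (intro notI) simp
  ultimately obtain k where "1 \<le> k" and "ord (p ^ k) \<alpha> \<le> b" and "b < ord (p ^ Suc k) \<alpha>"
    using ex_crossing_nat[of 1 n "\<lambda>k. ord (p ^ k) \<alpha>" b] assms(4) by auto
  then show ?thesis
    using ord_prime_power_Suc_cases[OF assms(1,3) \<open>1 \<le> k\<close>] by auto
qed

definition digit :: "nat \<Rightarrow> nat \<Rightarrow> nat \<Rightarrow> nat" where
  "digit p i x = x div p ^ i mod p"

definition small_low_digits :: "nat \<Rightarrow> nat \<Rightarrow> nat \<Rightarrow> bool" where
  "small_low_digits p k x \<longleftrightarrow> (\<forall>i<k. \<not> large_digit p (digit p i x))"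

lemma not_large_digit_iff: "\<not> large_digit p d \<longleftrightarrow> d < (p + 1) div 2"
proof -
  have "large_digit p d \<longleftrightarrow> p \<le> 2 * d" unfolding large_digit_def by linarith
  then show ?thesis by linarith
qed

lemma mod_power_Suc_eq_digit:
  "x mod p ^ Suc k = p ^ k * digit p k x + x mod p ^ k"
  unfolding power_Suc2 digit_def by (rule mod_mult2_eq)

lemma cong_power_Suc_of_digit_eq:
  assumes "[x = y] (mod p ^ k)" and "digit p k x = digit p k y"
  shows "[x = y] (mod p ^ Suc k)"
  using assms unfolding cong_def mod_power_Suc_eq_digit by simp

lemma digit_eq_of_cong:
  assumes "0 < p" and "[x = y] (mod p ^ k)" and "i < k"
  shows "digit p i x = digit p i y"
proof -
  have "p ^ Suc i dvd p ^ k" and "p ^ i dvd p ^ k"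
    using assms(3) by (meson le_imp_power_dvd less_imp_le Suc_leI)+
  then have "[x = y] (mod p ^ Suc i)" and "[x = y] (mod p ^ i)"
    using assms(2) cong_dvd_modulus_nat by blast+
  then have "p ^ i * digit p i x = p ^ i * digit p i y"
    unfolding cong_def mod_power_Suc_eq_digit by simp
  then show ?thesis using assms(1) by simp
qed

lemma small_low_digits_cong:
  assumes "0 < p" and "[x = y] (mod p ^ k)"
  shows "small_low_digits p k x \<longleftrightarrow> small_low_digits p k y"
  using digit_eq_of_cong[OF assms] by (simp add: small_low_digits_def)

lemma small_low_digits_Suc:
  "small_low_digits p (Suc k) x \<longleftrightarrow> small_low_digits p k x \<and> \<not> large_digit p (digit p k x)"
  by (auto simp: small_low_digits_def less_Suc_eq)

declare digits_base.simps [simp del]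

lemma not_large_digit_of_num_large_digits_0:
  assumes "2 \<le> p" and "num_large_digits p n = 0"
  shows "\<not> large_digit p (digit p i n)"
  using assms
proof (induction p n arbitrary: i rule: digits_base.induct)
  case (1 p n)
  show ?case
  proof (cases "n = 0")
    case True
    then show ?thesis using "1.prems"(1) by (simp add: digit_def large_digit_def)
  next
    case False
    then have "digits_base p n = n mod p # digits_base p (n div p)"
      using "1.prems"(1) by (subst digits_base.simps) simp
    then have "\<not> large_digit p (n mod p)" and "num_large_digits p (n div p) = 0"
      using "1.prems"(2) by (auto simp: num_large_digits_def split: if_splits)
    then show ?thesis
      using "1.IH"[OF _ "1.prems"(1)] False "1.prems"(1)
      by (cases i) (auto simp: digit_def div_mult2_eq)
  qed
qed

lemma S_le: "S \<alpha> p n b \<le> b"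
proof -
  have "S \<alpha> p n b \<le> card {..<b}" unfolding S_def by (intro card_mono) auto
  then show ?thesis by simp
qed

lemma card_periodic_le:
  fixes D b :: nat
  assumes "0 < D" and "\<And>s. P s \<longleftrightarrow> P (s mod D)"
  shows "card {s. s < b \<and> P s} \<le> (b div D + 1) * card {s. s < D \<and> P s}"
proof -
  let ?B = "{..b div D} \<times> {s. s < D \<and> P s}"
  have "card {s. s < b \<and> P s} \<le> card ?B"
  proof (rule card_inj_on_le[where f = "\<lambda>s. (s div D, s mod D)"])
    show "inj_on (\<lambda>s. (s div D, s mod D)) {s. s < b \<and> P s}"
      by (intro inj_onI) (metis div_mod_decomp prod.inject)
    show "(\<lambda>s. (s div D, s mod D)) ` {s. s < b \<and> P s} \<subseteq> ?B"
      using assms by (auto intro: div_le_mono)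
  qed simp
  then show ?thesis by (simp add: card_cartesian_product)
qed

definition small_exponents :: "nat \<Rightarrow> nat \<Rightarrow> nat \<Rightarrow> nat set" where
  "small_exponents p \<alpha> k = {s. s < ord (p ^ k) \<alpha> \<and> small_low_digits p k (\<alpha> ^ s)}"

lemma small_low_digits_power_mod_ord:
  assumes "0 < p" and "coprime p \<alpha>"
  shows "small_low_digits p k (\<alpha> ^ (s mod ord (p ^ k) \<alpha>)) \<longleftrightarrow>
    small_low_digits p k (\<alpha> ^ s)"
proof (rule small_low_digits_cong[OF assms(1)])
  show "[\<alpha> ^ (s mod ord (p ^ k) \<alpha>) = \<alpha> ^ s] (mod p ^ k)"
    using assms(2) by (subst order_divides_expdiff) (simp_all add: cong_def)
qed

lemma S_le_card_small_exponents:
  assumes "2 \<le> p" and "coprime p \<alpha>"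
  shows "S \<alpha> p 1 b \<le> (b div ord (p ^ k) \<alpha> + 1) * card (small_exponents p \<alpha> k)"
proof -
  have "S \<alpha> p 1 b \<le> card {s. s < b \<and> small_low_digits p k (\<alpha> ^ s)}"
    unfolding S_def using assms(1)
    by (intro card_mono) (auto simp: small_low_digits_def not_large_digit_of_num_large_digits_0)
  also have "\<dots> \<le> (b div ord (p ^ k) \<alpha> + 1) * card (small_exponents p \<alpha> k)"
    unfolding small_exponents_def using assms
    by (intro card_periodic_le) (simp_all add: small_low_digits_power_mod_ord)
  finally show ?thesis .
qed

lemma inj_on_digit_power_lift:
  fixes p \<alpha> k r :: nat
  defines "D \<equiv> ord (p ^ k) \<alpha>"
  assumes "0 < p" and "coprime p \<alpha>" and "ord (p ^ Suc k) \<alpha> = p * D"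
  shows "inj_on (\<lambda>i. digit p k (\<alpha> ^ (r + i * D))) {..<p}"
proof (rule inj_onI)
  fix i j
  assume "i \<in> {..<p}" "j \<in> {..<p}"
    and "digit p k (\<alpha> ^ (r + i * D)) = digit p k (\<alpha> ^ (r + j * D))"
  have "coprime (p ^ k) \<alpha>" and "coprime (p ^ Suc k) \<alpha>"
    using assms(3) by simp_all
  have "[r + i * D = r + j * D] (mod D)" by (simp add: cong_def)
  then have "[\<alpha> ^ (r + i * D) = \<alpha> ^ (r + j * D)] (mod p ^ k)"
    using \<open>coprime (p ^ k) \<alpha>\<close> by (simp add: order_divides_expdiff D_def)
  then have "[\<alpha> ^ (r + i * D) = \<alpha> ^ (r + j * D)] (mod p ^ Suc k)"
    using \<open>digit p k _ = _\<close> by (rule cong_power_Suc_of_digit_eq)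
  then have "[r + i * D = r + j * D] (mod p * D)"
    using \<open>coprime (p ^ Suc k) \<alpha>\<close> assms(4) by (simp add: order_divides_expdiff)
  then have "[i * D = j * D] (mod p * D)"
    by (simp only: cong_add_lcancel_nat)
  then have "i mod p * D = j mod p * D"
    by (simp only: cong_def mod_mult_mult2)
  moreover have "0 < D" using assms(3) by (simp add: D_def)
  ultimately show "i = j" using \<open>i \<in> {..<p}\<close> \<open>j \<in> {..<p}\<close> by simp
qed

lemma card_small_exponents_Suc_le:
  fixes p \<alpha> k :: nat
  assumes "0 < p" and "coprime p \<alpha>" and lift: "ord (p ^ Suc k) \<alpha> = p * ord (p ^ k) \<alpha>"
  shows "card (small_exponents p \<alpha> (Suc k)) \<le> (p + 1) div 2 * card (small_exponents p \<alpha> k)"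
proof -
  define D where "D = ord (p ^ k) \<alpha>"
  define I where "I r = {i. i < p \<and> \<not> large_digit p (digit p k (\<alpha> ^ (r + i * D)))}" for r
  have "0 < D" using assms(2) by (simp add: D_def)
  have card_I: "card (I r) \<le> (p + 1) div 2" for r
  proof -
    have "card (I r) \<le> card {..<(p + 1) div 2}"
    proof (rule card_inj_on_le[where f = "\<lambda>i. digit p k (\<alpha> ^ (r + i * D))"])
      show "inj_on (\<lambda>i. digit p k (\<alpha> ^ (r + i * D))) (I r)"
        using inj_on_digit_power_lift[OF assms, folded D_def] by (rule inj_on_subset) (auto simp: I_def)
    qed (auto simp: I_def not_large_digit_iff)
    then show ?thesis by simp
  qed
  have "small_exponents p \<alpha> (Suc k) \<subseteq> (\<lambda>(r, i). r + i * D) ` Sigma (small_exponents p \<alpha> k) I"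
  proof
    fix s
    assume "s \<in> small_exponents p \<alpha> (Suc k)"
    then have "s < p * D" and small: "small_low_digits p (Suc k) (\<alpha> ^ s)"
      using lift by (simp_all add: small_exponents_def D_def)
    have "s mod D \<in> small_exponents p \<alpha> k"
      using small \<open>0 < D\<close> assms(1,2)
      by (simp add: small_exponents_def small_low_digits_Suc small_low_digits_power_mod_ord D_def)
    moreover have "s div D \<in> I (s mod D)"
      using small \<open>s < p * D\<close> \<open>0 < D\<close>
      by (simp add: I_def small_low_digits_Suc div_less_iff_less_mult)
    ultimately show "s \<in> (\<lambda>(r, i). r + i * D) ` Sigma (small_exponents p \<alpha> k) I"
      by (intro image_eqI[where x = "(s mod D, s div D)"]) auto
  qed
  then have "card (small_exponents p \<alpha> (Suc k)) \<le> card (Sigma (small_exponents p \<alpha> k) I)"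
    by (rule surj_card_le[rotated]) (simp add: small_exponents_def I_def)
  also have "\<dots> = (\<Sum>r\<in>small_exponents p \<alpha> k. card (I r))"
    by (simp add: small_exponents_def I_def)
  also have "\<dots> \<le> (\<Sum>r\<in>small_exponents p \<alpha> k. (p + 1) div 2)"
    using card_I by (rule sum_mono)
  also have "\<dots> = (p + 1) div 2 * card (small_exponents p \<alpha> k)"
    by simp
  finally show ?thesis .
qed

lemma card_small_exponents_le:
  fixes p \<alpha> k :: nat
  assumes "prime p" and "coprime p \<alpha>" and "1 \<le> k"
  shows "\<exists>j. ord (p ^ k) \<alpha> = ord p \<alpha> * p ^ j \<and>
    card (small_exponents p \<alpha> k) \<le> ord p \<alpha> * ((p + 1) div 2) ^ j"
  using assms(3)
proof (induction k rule: dec_induct)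
  case base
  have "card (small_exponents p \<alpha> 1) \<le> ord p \<alpha>"
    using card_mono[of "{..<ord p \<alpha>}" "small_exponents p \<alpha> 1"] by (auto simp: small_exponents_def)
  then show ?case by (intro exI[of _ 0]) simp
next
  case (step k)
  then obtain j where j: "ord (p ^ k) \<alpha> = ord p \<alpha> * p ^ j"
    "card (small_exponents p \<alpha> k) \<le> ord p \<alpha> * ((p + 1) div 2) ^ j" by blast
  from ord_prime_power_Suc_cases[OF assms(1,2) step(1)] show ?case
  proof
    assume eq: "ord (p ^ Suc k) \<alpha> = ord (p ^ k) \<alpha>"
    then have "small_exponents p \<alpha> (Suc k) \<subseteq> small_exponents p \<alpha> k"
      by (auto simp: small_exponents_def small_low_digits_Suc)
    then have "card (small_exponents p \<alpha> (Suc k)) \<le> card (small_exponents p \<alpha> k)"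
      by (rule card_mono[rotated]) (simp add: small_exponents_def)
    then show ?case using j eq by auto
  next
    assume eq: "ord (p ^ Suc k) \<alpha> = p * ord (p ^ k) \<alpha>"
    have "card (small_exponents p \<alpha> (Suc k)) \<le> (p + 1) div 2 * card (small_exponents p \<alpha> k)"
      using card_small_exponents_Suc_le[OF prime_gt_0_nat[OF assms(1)] assms(2) eq] .
    also have "\<dots> \<le> (p + 1) div 2 * (ord p \<alpha> * ((p + 1) div 2) ^ j)"
      using j(2) by (rule mult_le_mono2)
    finally show ?case using j eq by (intro exI[of _ "Suc j"]) (simp add: ac_simps)
  qed
qed

lemma S_le_four_powr_log_of_ord_bracket:
  fixes p \<alpha> b k :: nat
  assumes "prime p" and "odd p" and "coprime p \<alpha>" and "1 \<le> k"
    and "ord (p ^ k) \<alpha> \<le> b" and "b < p * ord (p ^ k) \<alpha>"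
  shows "real (S \<alpha> p 1 b) \<le> 4 * real b powr log p ((real p + 1) / 2)"
proof -
  define e where "e = ord p \<alpha>"
  define D where "D = ord (p ^ k) \<alpha>"
  obtain j where D: "D = e * p ^ j" and card: "card (small_exponents p \<alpha> k) \<le> e * ((p + 1) div 2) ^ j"
    using card_small_exponents_le[OF assms(1,3,4)] by (auto simp: D_def e_def)
  have "0 < e" and "e < p" using ord_prime_bounds[OF assms(1,3)] by (simp_all add: e_def)
  then have "0 < D" by (simp add: D)
  have "S \<alpha> p 1 b \<le> (b div D + 1) * (e * ((p + 1) div 2) ^ j)"
    using S_le_card_small_exponents[OF prime_ge_2_nat[OF assms(1)] assms(3), of b k] card
    by (metis D_def mult_le_mono2 le_trans)
  then have "real (S \<alpha> p 1 b) \<le> real ((b div D + 1) * (e * ((p + 1) div 2) ^ j))"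
    by (simp only: of_nat_le_iff)
  also have "\<dots> = (real (b div D) + 1) * (real e * real ((p + 1) div 2) ^ j)"
    by (simp add: algebra_simps)
  also have "real ((p + 1) div 2) = (real p + 1) / 2"
    using assms(2) by (auto elim!: oddE simp: field_simps)
  also have "(real (b div D) + 1) * (real e * ((real p + 1) / 2) ^ j)
      \<le> (real b / real D + 1) * (real e * ((real p + 1) / 2) ^ j)"
    by (intro mult_right_mono add_right_mono of_nat_div_le_of_nat) auto
  also have "\<dots> \<le> 4 * (real b / real D * real e * real p ^ j) powr log p ((real p + 1) / 2)"
  proof (rule add_one_mult_le_four_powr_log)
    show "1 \<le> real b / real D" and "real b / real D \<le> real p"
      using assms(5,6) \<open>0 < D\<close> by (simp_all add: D_def field_simps flip: of_nat_mult)
  qed (use prime_gt_1_nat[OF assms(1)] \<open>0 < e\<close> \<open>e < p\<close> in auto)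
  also have "real b / real D * real e * real p ^ j = real b"
    using \<open>0 < D\<close> by (simp add: D)
  finally show ?thesis .
qed

theorem theorem2p7:
  fixes p alpha a :: nat
  assumes "prime p" and "odd p" and "alpha > 1" and "coprime p alpha" and "a \<ge> 1"
  shows "real (S alpha p 1 a) \<le> 4 * real a powr (log p ((real p + 1) / 2))"
proof (cases "a < ord p alpha")
  case True
  then have "real a + 1 \<le> 2 * real a powr log p ((real p + 1) / 2)"
    using add_one_le_two_powr_log[of p a] prime_gt_1_nat[OF assms(1)] ord_prime_bounds(2)[OF assms(1,4)] assms(5)
    by simp
  then show ?thesis using S_le[of alpha p 1 a] by simp
next
  case False
  then have "ord p alpha \<le> a" by simp
  then obtain k where "1 \<le> k" and "ord (p ^ k) alpha \<le> a" and "a < p * ord (p ^ k) alpha"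
    using ord_prime_power_bracket[OF assms(1,3,4)] by blast
  then show ?thesis
    using S_le_four_powr_log_of_ord_bracket[OF assms(1,2,4)] by blast
qed

end
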